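(* Every scattered polynomial $h(x)\in\mathbb{F}_{q^n}[x]$ in standard form is bijective as a map $\mathbb{F}_{q^n}\to\mathbb{F}_{q^n}$.
   Context: $q$ is a prime power, $n>1$. A $q$-polynomial $h(x)=\sum_{i=0}^{n-1}b_ix^{q^i}\in\mathbb{F}_{q^n}[x]$ is scattered if for all $y,z\in\mathbb{F}_{q^n}$, $zh(y)-yh(z)=0$ implies $y,z$ are $\mathbb{F}_q$-linearly dependent. Let $\Delta_h=\{(i-j)\bmod n\colon b_ib_j\neq0,\ i\neq j\}\cup\{n\}$ and $t_h=\gcd(\Delta_h)$; $h$ is in standard form if $t_h>1$. *)

theory Defs
  imports "HOL-Computational_Algebra.Primes"
begin

text \<open>The ambient field F_{q^n} is a finite field type 'a with CARD('a) = q^n;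
  the subfield F_q is the set of elements x with x^q = x.\<close>

definition Fq :: "nat \<Rightarrow> 'a::field set" where
  "Fq q = {x. x ^ q = x}"

definition qpoly :: "nat \<Rightarrow> nat \<Rightarrow> (nat \<Rightarrow> 'a::field) \<Rightarrow> 'a \<Rightarrow> 'a" where
  "qpoly q n b x = (\<Sum>i<n. b i * x ^ (q ^ i))"

definition Fq_lin_dep :: "nat \<Rightarrow> 'a::field \<Rightarrow> 'a \<Rightarrow> bool" where
  "Fq_lin_dep q y z \<longleftrightarrow>
     (\<exists>a c. a \<in> Fq q \<and> c \<in> Fq q \<and> (a \<noteq> 0 \<or> c \<noteq> 0) \<and> a * y + c * z = 0)"

definition scattered :: "nat \<Rightarrow> nat \<Rightarrow> (nat \<Rightarrow> 'a::field) \<Rightarrow> bool" where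
  "scattered q n b \<longleftrightarrow>
     (\<forall>y z. z * qpoly q n b y - y * qpoly q n b z = 0 \<longrightarrow> Fq_lin_dep q y z)"

definition Delta :: "nat \<Rightarrow> (nat \<Rightarrow> 'a::field) \<Rightarrow> nat set" where
  "Delta n b = {nat ((int i - int j) mod int n) | i j.
                  i < n \<and> j < n \<and> b i * b j \<noteq> 0 \<and> i \<noteq> j} \<union> {n}"

definition t_h :: "nat \<Rightarrow> (nat \<Rightarrow> 'a::field) \<Rightarrow> nat" where
  "t_h n b = Gcd (Delta n b)"

definition standard_form :: "nat \<Rightarrow> (nat \<Rightarrow> 'a::field) \<Rightarrow> bool" where
  "standard_form n b \<longleftrightarrow> t_h n b > 1"

end

theory Submission
  imports Defs "HOL-Computational_Algebra.Polynomial" "HOL-Number_Theory.Cong"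
begin

text \<open>Let \<open>t = t_h n b > 1\<close>. Since \<open>t\<close> divides \<open>n\<close>, the field \<open>F_{q^n}\<close> contains
  \<open>F_{q^t} = {x. x ^ q ^ t = x}\<close>, which has more than \<open>q\<close> elements, so there is some
  \<open>\<lambda> \<in> F_{q^t}\<close> outside \<open>F_q\<close>. All indices \<open>i\<close> with \<open>b i \<noteq> 0\<close> are congruent modulo \<open>t\<close>,
  hence \<open>\<lambda> ^ q ^ i\<close> is one and the same \<open>\<mu>\<close> for all of them and \<open>h (\<lambda> * y) = \<mu> * h y\<close>.
  A nonzero root \<open>w\<close> of \<open>h\<close> would make \<open>\<lambda> * w\<close> a root too; then \<open>z * h y - y * h z = 0\<close>
  for \<open>y = w\<close>, \<open>z = \<lambda> * w\<close>, and scatteredness would force \<open>\<lambda> \<in> F_q\<close>. So the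
  \<open>F_q\<close>-linear map \<open>h\<close> has trivial kernel and is injective, hence bijective on the
  finite field.\<close>

lemma power_card_minus_one_eq_1:
  fixes x :: "'a::{finite,field}"
  assumes "x \<noteq> 0"
  shows "x ^ (card (UNIV :: 'a set) - 1) = 1"
proof -
  have "(\<Prod>y\<in>UNIV-{0}. x * y) = x ^ (card (UNIV :: 'a set) - 1) * \<Prod>(UNIV-{0})"
    by (simp add: prod.distrib mult_ac)
  also have "(\<Prod>y\<in>UNIV-{0}. x * y) = (\<Prod>y\<in>UNIV-{0}. y)"
    by (rule prod.reindex_bij_witness[of _ "\<lambda>y. y / x" "\<lambda>y. x * y"]) (use assms in auto)
  finally have "x ^ (card (UNIV :: 'a set) - 1) * \<Prod>(UNIV-{0::'a}) = 1 * \<Prod>(UNIV-{0::'a})"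
    by simp
  moreover have "\<Prod>(UNIV-{0::'a}) \<noteq> 0"
    by (simp add: prod_zero_iff)
  ultimately show ?thesis
    by (metis mult_right_cancel)
qed

lemma diff_1_dvd_power_diff_1_nat: "(a::nat) - 1 dvd a ^ r - 1"
proof (cases "a = 0")
  case False
  have "int a - 1 dvd int a ^ r - 1"
    by (simp add: power_diff_1_eq)
  with False show ?thesis
    by (simp add: of_nat_diff flip: int_dvd_int_iff)
qed (cases r; simp)

lemma card_geometric_sum_roots_le:
  assumes "0 < m" "0 < d"
  shows "card {x::'a::idom. (\<Sum>j<d. (x ^ m) ^ j) = 0} \<le> (d - 1) * m"
proof -
  define Q where "Q = (\<Sum>j<d. monom (1::'a) (j * m))"
  have poly_Q: "poly Q x = (\<Sum>j<d. (x ^ m) ^ j)" for x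
    unfolding Q_def by (simp add: poly_sum poly_monom mult.commute flip: power_mult)
  have "Q \<noteq> 0"
  proof
    assume "Q = 0"
    moreover have "poly Q 0 = 1"
      unfolding poly_Q using assms by (simp add: sum.remove[of "{..<d}" 0] zero_power)
    ultimately show False
      by simp
  qed
  moreover have "degree Q \<le> (d - 1) * m"
    unfolding Q_def
    by (rule degree_sum_le) (auto intro!: order.trans[OF degree_monom_le] simp: mult_le_mono1)
  ultimately show ?thesis
    using card_poly_roots_bound[of Q] by (simp add: poly_Q)
qed

text \<open>The units are the roots of \<open>x ^ (m * d) - 1 = (x ^ m - 1) * (\<Sum>j<d. (x ^ m) ^ j)\<close>,
  and the second factor has at most \<open>(d - 1) * m\<close> roots.\<close>

lemma card_roots_of_unity_ge:
  assumes "m dvd card (UNIV :: 'a::{finite,field} set) - 1"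
  shows "m \<le> card {x::'a. x ^ m = 1}"
proof (cases "m = 0")
  case False
  obtain d where md: "card (UNIV :: 'a set) - 1 = m * d"
    using assms by blast
  have "card (UNIV :: 'a set) \<ge> 2"
    using card_mono[of UNIV "{0, 1 :: 'a}"] by simp
  then have "d > 0"
    using md by (cases d) auto
  define K where "K = {x::'a. x ^ m = 1}"
  define R where "R = {x::'a. (\<Sum>j<d. (x ^ m) ^ j) = 0}"
  have "UNIV - {0} \<subseteq> K \<union> R"
  proof
    fix x :: 'a
    assume "x \<in> UNIV - {0}"
    then have "(x ^ m) ^ d = 1"
      using power_card_minus_one_eq_1[of x] md by (simp flip: power_mult)
    then have "(x ^ m - 1) * (\<Sum>j<d. (x ^ m) ^ j) = 0"
      using power_diff_1_eq[of "x ^ m" d] by simp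
    then show "x \<in> K \<union> R"
      by (auto simp: K_def R_def)
  qed
  then have "card (UNIV - {0::'a}) \<le> card K + card R"
    by (meson card_Un_le card_mono finite order.trans)
  moreover have "card R \<le> (d - 1) * m"
    unfolding R_def using False \<open>d > 0\<close> by (intro card_geometric_sum_roots_le) auto
  ultimately have "m * d \<le> card K + (d - 1) * m"
    using md by (simp add: card_Diff_singleton)
  then show ?thesis
    using \<open>d > 0\<close> by (cases d) (auto simp: K_def algebra_simps)
qed simp

lemma card_Fq_le:
  assumes "2 \<le> q"
  shows "card (Fq q :: 'a::field set) \<le> q"
proof -
  define P where "P = monom (1::'a) q - [:0, 1:]"
  have "P \<noteq> 0"
  proof
    assume "P = 0"
    then have "coeff P q = 0"
      by simp
    then show False
      using assms by (simp add: P_def coeff_pCons split: nat.splits)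
  qed
  moreover have "degree P \<le> q"
    unfolding P_def using assms
    by (intro degree_diff_le) (auto intro: order.trans[OF degree_monom_le] simp: degree_pCons_eq_if)
  ultimately show ?thesis
    using card_poly_roots_bound[of P] by (simp add: P_def poly_monom Fq_def)
qed

lemma exists_Fq_power_not_in_Fq:
  fixes q n t :: nat
  assumes card: "card (UNIV :: 'a::{finite,field} set) = q ^ n" and "2 \<le> q" "t dvd n" "1 < t"
  obtains l where "l \<in> Fq (q ^ t)" "l \<notin> (Fq q :: 'a set)"
proof -
  define m where "m = q ^ t - 1"
  have "q < q ^ t"
    using power_strict_increasing[of 1 t q] assms by simp
  then have q_t: "q ^ t = Suc m"
    unfolding m_def by simp
  obtain r where "n = t * r"
    using assms by blast
  then have "m dvd card (UNIV :: 'a set) - 1"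
    using diff_1_dvd_power_diff_1_nat[of "q ^ t" r] unfolding m_def card by (simp add: power_mult)
  then have "m \<le> card {x::'a. x ^ m = 1}"
    by (rule card_roots_of_unity_ge)
  moreover have "insert 0 {x::'a. x ^ m = 1} \<subseteq> Fq (q ^ t)"
    by (auto simp: Fq_def q_t)
  moreover have "(0::'a) \<notin> {x. x ^ m = 1}"
    using \<open>2 \<le> q\<close> \<open>q < q ^ t\<close> q_t by (simp add: zero_power)
  ultimately have "q ^ t \<le> card (Fq (q ^ t) :: 'a set)"
    using q_t card_mono[of "Fq (q ^ t)" "insert 0 {x::'a. x ^ m = 1}"] by simp
  moreover have "card (Fq q :: 'a set) \<le> q"
    using card_Fq_le \<open>2 \<le> q\<close> by blast
  ultimately have "\<not> Fq (q ^ t) \<subseteq> (Fq q :: 'a set)"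
    using \<open>q < q ^ t\<close> card_mono[of "Fq q :: 'a set" "Fq (q ^ t)"] by auto
  then show thesis
    using that by blast
qed

lemma CHAR_dvd_card: "CHAR('a::{finite,ring_1}) dvd card (UNIV :: 'a set)"
proof -
  have "(\<Sum>y\<in>(UNIV::'a set). 1 + y) = (\<Sum>y\<in>UNIV. y)"
    by (rule sum.reindex_bij_witness[of _ "\<lambda>y. y - 1" "\<lambda>y. 1 + y"]) auto
  then have "of_nat (card (UNIV :: 'a set)) = (0::'a)"
    by (simp add: sum.distrib)
  then show ?thesis
    by (simp add: of_nat_eq_0_iff_char_dvd)
qed

lemma CHAR_eq_of_card_prime_power:
  assumes "prime p" "card (UNIV :: 'a::{finite,field} set) = p ^ m"
  shows "CHAR('a) = p"
proof -
  have "prime CHAR('a)"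
    by (simp add: finite_imp_CHAR_pos prime_CHAR_semidom)
  moreover have "CHAR('a) dvd p ^ m"
    using CHAR_dvd_card assms(2) by metis
  ultimately show ?thesis
    using assms(1) by (metis prime_dvd_power primes_dvd_imp_eq)
qed

lemma Frobenius_power_add:
  fixes x y :: "'a::comm_ring_1"
  assumes "prime CHAR('a)" "q = CHAR('a) ^ k"
  shows "(x + y) ^ (q ^ i) = x ^ (q ^ i) + y ^ (q ^ i)"
  by (rule freshmans_dream'[where n = "k * i"]) (use assms in \<open>simp_all add: power_mult\<close>)

lemma Frobenius_power_diff:
  fixes x y :: "'a::comm_ring_1"
  assumes "prime CHAR('a)" "q = CHAR('a) ^ k"
  shows "(x - y) ^ (q ^ i) = x ^ (q ^ i) - y ^ (q ^ i)"
  using Frobenius_power_add[OF assms, of "x - y" y i] by (simp add: eq_diff_eq)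

lemma uminus_in_Fq:
  fixes a :: "'a::field"
  assumes "prime CHAR('a)" "q = CHAR('a) ^ k" "a \<in> Fq q"
  shows "- a \<in> Fq q"
proof -
  have "(0 - a) ^ (q ^ 1) = 0 ^ (q ^ 1) - a ^ (q ^ 1)"
    using Frobenius_power_diff[OF assms(1,2)] .
  moreover have "q > 0"
    using assms(1,2) by (simp add: prime_gt_0_nat)
  ultimately show ?thesis
    using assms(3) by (simp add: Fq_def zero_power)
qed

lemma qpoly_diff:
  assumes "prime CHAR('a::field)" "q = CHAR('a) ^ k"
  shows "qpoly q n b (x - y) = qpoly q n b x - qpoly q n b (y :: 'a)"
  unfolding qpoly_def
  by (simp add: Frobenius_power_diff[OF assms] right_diff_distrib sum_subtractf)

lemma Fq_power_mult:
  assumes "l \<in> Fq (q ^ t)"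
  shows "l \<in> Fq (q ^ (t * r))"
proof (induction r)
  case (Suc r)
  have "l ^ (q ^ (t * Suc r)) = (l ^ (q ^ t)) ^ (q ^ (t * r))"
    by (simp add: power_add mult.commute flip: power_mult)
  with assms Suc show ?case
    by (simp add: Fq_def)
qed (simp add: Fq_def)

lemma Fq_power_cong:
  assumes "l \<in> Fq (q ^ t)" "[i = j] (mod t)"
  shows "l ^ (q ^ i) = l ^ (q ^ j)"
proof -
  have "l ^ (q ^ i) = l ^ (q ^ (i mod t))" for i
  proof -
    have "l ^ (q ^ i) = (l ^ (q ^ (t * (i div t)))) ^ (q ^ (i mod t))"
      by (metis div_mult_mod_eq mult.commute power_add power_mult)
    with Fq_power_mult[OF assms(1)] show ?thesis
      by (simp add: Fq_def)
  qed
  with assms(2) show ?thesis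
    by (metis cong_def)
qed

lemma t_h_dvd: "t_h n b dvd n"
  unfolding t_h_def by (rule Gcd_dvd) (simp add: Delta_def)

lemma support_cong_mod_t_h:
  fixes b :: "nat \<Rightarrow> 'a::field"
  assumes "i < n" "j < n" "b i \<noteq> 0" "b j \<noteq> 0"
  shows "[i = j] (mod t_h n b)"
proof (cases "i = j")
  case False
  let ?d = "(int i - int j) mod int n"
  have "nat ?d \<in> Delta n b"
    unfolding Delta_def using assms False by (intro UnI1 CollectI exI[of _ i] exI[of _ j]) simp
  then have "int (t_h n b) dvd int (nat ?d)"
    unfolding t_h_def int_dvd_int_iff by (rule Gcd_dvd)
  moreover have "?d \<ge> 0"
    using assms(1) by simp
  ultimately have "int (t_h n b) dvd ?d"
    by simp
  moreover have "int (t_h n b) dvd int n"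
    using t_h_dvd by simp
  ultimately have "int (t_h n b) dvd int i - int j"
    using dvd_mod_iff by blast
  then show ?thesis
    by (simp add: cong_iff_dvd_diff flip: cong_int_iff)
qed simp

lemma qpoly_mult_eigenvalue:
  fixes b :: "nat \<Rightarrow> 'a::field"
  assumes "l \<in> Fq (q ^ t_h n b)"
  obtains \<mu> where "\<And>y. qpoly q n b (l * y) = \<mu> * qpoly q n b y"
proof (cases "\<exists>s<n. b s \<noteq> 0")
  case True
  then obtain s where "s < n" "b s \<noteq> 0"
    by blast
  have "qpoly q n b (l * y) = l ^ q ^ s * qpoly q n b y" for y
    unfolding qpoly_def sum_distrib_left
  proof (rule sum.cong)
    fix i
    assume "i \<in> {..<n}"
    then show "b i * (l * y) ^ q ^ i = l ^ q ^ s * (b i * y ^ q ^ i)"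
      using Fq_power_cong[OF assms support_cong_mod_t_h[of i n s b]] \<open>s < n\<close> \<open>b s \<noteq> 0\<close>
      by (cases "b i = 0") (auto simp: power_mult_distrib)
  qed simp
  then show thesis
    by (rule that)
next
  case False
  then show thesis
    using that[of 0] by (simp add: qpoly_def)
qed

lemma scattered_root_ratio_in_Fq:
  fixes b :: "nat \<Rightarrow> 'a::field"
  assumes "prime CHAR('a)" "q = CHAR('a) ^ k" "scattered q n b"
    and "w \<noteq> 0" "qpoly q n b w = 0" "qpoly q n b (l * w) = 0"
  shows "l \<in> Fq q"
proof -
  have "Fq_lin_dep q w (l * w)"
    using assms(3,5,6) unfolding scattered_def by (metis mult_zero_right diff_self)
  then obtain a c where a: "a \<in> Fq q" and c: "c \<in> Fq q" and "a \<noteq> 0 \<or> c \<noteq> 0"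
    and "a * w + c * (l * w) = 0"
    unfolding Fq_lin_dep_def by blast
  then have "(a + c * l) * w = 0"
    by (simp add: algebra_simps)
  with \<open>w \<noteq> 0\<close> have "a + c * l = 0"
    by simp
  with \<open>a \<noteq> 0 \<or> c \<noteq> 0\<close> have "c \<noteq> 0"
    by auto
  with \<open>a + c * l = 0\<close> have "l = - a / c"
    by (simp add: eq_divide_eq add_eq_0_iff2 mult.commute)
  moreover have "- a \<in> Fq q"
    using uminus_in_Fq[OF assms(1,2) a] .
  ultimately show ?thesis
    using c unfolding Fq_def by (simp only: power_divide mem_Collect_eq)
qed

theorem theorem4p5:
  fixes q n :: nat and b :: "nat \<Rightarrow> 'a::{finite,field}"
  assumes "\<exists>p k. prime p \<and> k > 0 \<and> q = p ^ k"
    and "n > 1"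
    and "card (UNIV :: 'a set) = q ^ n"
    and "scattered q n b"
    and "standard_form n b"
  shows "bij (qpoly q n b)"
proof -
  obtain p k where p: "prime p" and "k > 0" and q: "q = p ^ k"
    using assms(1) by blast
  have "CHAR('a) = p"
    using CHAR_eq_of_card_prime_power[OF p, where 'a = 'a] assms(3) q by (simp flip: power_mult)
  then have char: "prime CHAR('a)" "q = CHAR('a) ^ k"
    using p q by simp_all
  have "p \<le> q"
    unfolding q using prime_gt_0_nat[OF p] \<open>k > 0\<close> by (simp add: self_le_power)
  then have "2 \<le> q"
    using prime_ge_2_nat[OF p] by linarith
  obtain l :: 'a where l: "l \<in> Fq (q ^ t_h n b)" "l \<notin> Fq q"
    using exists_Fq_power_not_in_Fq[OF assms(3) \<open>2 \<le> q\<close> t_h_dvd] assms(5)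
    unfolding standard_form_def by blast
  obtain \<mu> where \<mu>: "\<And>y. qpoly q n b (l * y) = \<mu> * qpoly q n b y"
    using qpoly_mult_eigenvalue[OF l(1)] by blast
  have "inj (qpoly q n b)"
  proof (rule injI, rule ccontr)
    fix x y :: 'a
    assume "qpoly q n b x = qpoly q n b y" "x \<noteq> y"
    then have "qpoly q n b (x - y) = 0" "qpoly q n b (l * (x - y)) = 0"
      using qpoly_diff[OF char] \<mu> by simp_all
    then show False
      using scattered_root_ratio_in_Fq[OF char assms(4), of "x - y" l] l(2) \<open>x \<noteq> y\<close> by simp
  qed
  then show ?thesis
    by (simp add: bij_def finite_UNIV_inj_surj)
qed

end
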